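(* Let $n\ge 2$ and $N(x)=1-x$. Then $\mathbf{H}$ is self-dual with respect to $N$: $1-\mathbf{H}(1-x_1,\dots,1-x_n)=\mathbf{H}(x_1,\dots,x_n)$ for all $\mathbf{x}\in[0,1]^n$.
   Context: For $\mathbf{x}\in[0,1]^n$ let $x_{(1)}\ge\dots\ge x_{(n)}$ be its entries in decreasing order, and define the median $Med(\mathbf{x})=\frac12(x_{(k)}+x_{(k+1)})$ if $n=2k$ and $Med(\mathbf{x})=x_{(k+1)}$ if $n=2k+1$. Define $f_i(\mathbf{x})=\frac1n$ if $x_1=\dots=x_n$, and otherwise $f_i(\mathbf{x})=\frac{1}{n-1}\Big(1-\frac{|x_i-Med(\mathbf{x})|}{\sum_{j=1}^n|x_j-Med(\mathbf{x})|}\Big)$. Then $\mathbf{H}(\mathbf{x})=\sum_{i=1}^n f_i(\mathbf{x})\,x_i$. *)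

theory Defs
  imports Main "HOL.Real"
begin

text \<open>Vectors x in [0,1]^n are represented as real lists of length n; entry x_i is xs ! (i-1).
  The decreasingly ordered entries x_(1) >= ... >= x_(n) are rev (sort xs).\<close>

definition Med :: "real list \<Rightarrow> real" where
  "Med xs = (let n = length xs; s = rev (sort xs); k = n div 2 in
     if even n then (s ! (k - 1) + s ! k) / 2 else s ! k)"

definition fw :: "nat \<Rightarrow> real list \<Rightarrow> real" where
  "fw i xs = (let n = length xs; m = Med xs in
     if (\<forall>j<n. \<forall>l<n. xs ! j = xs ! l) then 1 / real n
     else (1 / (real n - 1)) * (1 - \<bar>xs ! i - m\<bar> / (\<Sum>j<n. \<bar>xs ! j - m\<bar>)))"

definition H :: "real list \<Rightarrow> real" where
  "H xs = (\<Sum>i<length xs. fw i xs * xs ! i)"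

end

theory Submission
  imports Defs "HOL-Library.Multiset"
begin

text \<open>The reflection \<open>x \<mapsto> c - x\<close> reverses the order, so it commutes with the median and
  preserves every absolute deviation \<open>\<bar>x\<^sub>i - Med x\<bar>\<close>; hence it leaves all weights \<open>f\<^sub>i\<close>
  unchanged. As the weights sum to 1, \<open>H (c - x) = c - H x\<close>, and \<open>c = 1\<close> is self-duality.\<close>

lemma sort_map_antimono:
  fixes f :: "'a::linorder \<Rightarrow> 'b::linorder"
  assumes "antimono f"
  shows "sort (map f xs) = rev (map f (sort xs))"
proof (rule properties_for_sort)
  show "mset (rev (map f (sort xs))) = mset (map f xs)"
    by simp
  have "sorted_wrt (\<le>) (sort xs)"
    by simp
  then have "sorted_wrt (\<lambda>a b. f b \<le> f a) (sort xs)"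
    by (rule sorted_wrt_mono_rel[rotated]) (use assms in \<open>auto simp: antimono_def\<close>)
  then show "sorted (rev (map f (sort xs)))"
    by (simp add: sorted_wrt_map sorted_wrt_rev)
qed

lemma Med_conv_sort:
  assumes "xs \<noteq> []"
  shows "Med xs = (let s = sort xs; k = length xs div 2 in
                     if even (length xs) then (s ! (k - 1) + s ! k) / 2 else s ! k)"
proof (cases "even (length xs)")
  case True
  then obtain k where k: "length xs = 2 * k"
    by (rule evenE)
  with assms have "k \<ge> 1"
    by (cases k) auto
  then have "rev (sort xs) ! (k - 1) = sort xs ! k" "rev (sort xs) ! k = sort xs ! (k - 1)"
    using k by (simp_all add: rev_nth Suc_diff_Suc)
  with True k show ?thesis
    by (simp add: Med_def Let_def)
next
  case False
  then obtain k where "length xs = 2 * k + 1"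
    by (metis oddE)
  with False show ?thesis
    by (simp add: Med_def Let_def rev_nth)
qed

lemma Med_reflect:
  fixes xs :: "real list"
  assumes "xs \<noteq> []"
  shows "Med (map (\<lambda>x. c - x) xs) = c - Med xs"
proof -
  define k where "k = length xs div 2"
  have rev_sort: "rev (sort (map (\<lambda>x. c - x) xs)) = map (\<lambda>x. c - x) (sort xs)"
    by (simp add: sort_map_antimono antimono_def)
  have "k < length xs"
    using assms by (simp add: k_def)
  show ?thesis
  proof (cases "even (length xs)")
    case True
    with \<open>k < length xs\<close> have "k - 1 < length xs"
      by linarith
    with True \<open>k < length xs\<close> show ?thesis
      unfolding Med_def[of "map _ xs"] Med_conv_sort[OF assms]
      by (simp add: Let_def rev_sort flip: k_def) argo
  next
    case False
    with \<open>k < length xs\<close> show ?thesis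
      unfolding Med_def[of "map _ xs"] Med_conv_sort[OF assms]
      by (simp add: Let_def rev_sort flip: k_def)
  qed
qed

lemma sum_abs_deviation_pos:
  fixes xs :: "real list"
  assumes "\<not> (\<forall>j<length xs. \<forall>l<length xs. xs ! j = xs ! l)"
  shows "0 < (\<Sum>j<length xs. \<bar>xs ! j - m\<bar>)"
proof -
  obtain j where "j < length xs" "xs ! j \<noteq> m"
    using assms by metis
  then show ?thesis
    by (intro sum_pos2[of _ j]) auto
qed

lemma fw_reflect:
  fixes xs :: "real list"
  assumes "xs \<noteq> []" and "i < length xs"
  shows "fw i (map (\<lambda>x. c - x) xs) = fw i xs"
proof -
  let ?ys = "map (\<lambda>x. c - x) xs"
  have dev: "\<bar>?ys ! j - Med ?ys\<bar> = \<bar>xs ! j - Med xs\<bar>" if "j < length xs" for j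
    using that assms(1) by (simp add: Med_reflect abs_minus_commute)
  then have sum_dev: "(\<Sum>j<length xs. \<bar>?ys ! j - Med ?ys\<bar>) = (\<Sum>j<length xs. \<bar>xs ! j - Med xs\<bar>)"
    by (intro sum.cong) auto
  have const: "(\<forall>j<length xs. \<forall>l<length xs. ?ys ! j = ?ys ! l)
             \<longleftrightarrow> (\<forall>j<length xs. \<forall>l<length xs. xs ! j = xs ! l)"
    by simp
  show ?thesis
    unfolding fw_def Let_def length_map const sum_dev dev[OF assms(2)] ..
qed

lemma sum_fw_eq_1:
  assumes "xs \<noteq> []"
  shows "(\<Sum>i<length xs. fw i xs) = 1"
proof (cases "\<forall>j<length xs. \<forall>l<length xs. xs ! j = xs ! l")
  case True
  have "fw i xs = 1 / real (length xs)" for i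
    unfolding fw_def Let_def if_P[OF True] ..
  with assms show ?thesis
    by simp
next
  case False
  define n where "n = length xs"
  define D where "D = (\<Sum>j<n. \<bar>xs ! j - Med xs\<bar>)"
  have "D > 0"
    unfolding D_def n_def by (rule sum_abs_deviation_pos[OF False])
  have "n \<ge> 2"
  proof (rule ccontr)
    assume "\<not> n \<ge> 2"
    then have "\<forall>j<n. \<forall>l<n. j = l"
      by simp
    with False show False
      unfolding n_def by metis
  qed
  have "fw i xs = (1 - \<bar>xs ! i - Med xs\<bar> / D) / (real n - 1)" for i
    unfolding fw_def Let_def if_not_P[OF False] D_def n_def by simp
  then have "(\<Sum>i<n. fw i xs) = (\<Sum>i<n. (1 - \<bar>xs ! i - Med xs\<bar> / D) / (real n - 1))"
    by simp
  also have "\<dots> = (real n - D / D) / (real n - 1)"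
    by (simp add: sum_divide_distrib[symmetric] sum_subtractf D_def)
  also have "\<dots> = 1"
    using \<open>D > 0\<close> \<open>n \<ge> 2\<close> by simp
  finally show ?thesis
    by (simp add: n_def)
qed

lemma H_reflect:
  fixes xs :: "real list"
  assumes "xs \<noteq> []"
  shows "H (map (\<lambda>x. c - x) xs) = c - H xs"
proof -
  have "H (map (\<lambda>x. c - x) xs) = (\<Sum>i<length xs. fw i xs * (c - xs ! i))"
    unfolding H_def using assms by (intro sum.cong) (auto simp: fw_reflect)
  also have "\<dots> = c * (\<Sum>i<length xs. fw i xs) - H xs"
    by (simp add: H_def algebra_simps sum_subtractf sum_distrib_left)
  finally show ?thesis
    using sum_fw_eq_1[OF assms] by simp
qed

theorem proposition17:
  fixes xs :: "real list"
  assumes "length xs \<ge> 2"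
    and "\<forall>x\<in>set xs. 0 \<le> x \<and> x \<le> 1"
  shows "1 - H (map (\<lambda>x. 1 - x) xs) = H xs"
proof -
  have "xs \<noteq> []"
    using assms(1) by auto
  then show ?thesis
    by (simp add: H_reflect)
qed

end
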